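(* Let $f$ be smooth and of bistable type: there is $\alpha\in(0,1)$ with $f(0)=f(\alpha)=f(1)=0$, $f'(0)<0$, $f'(1)<0$, $f'(\alpha)>0$, $f>0$ on $(-\infty,0)\cup(\alpha,1)$ and $f<0$ on $(0,\alpha)\cup(1,+\infty)$. Let $\tau\in[0,\tau_m)$ with $\tau_m:=1/\sup_{u\in[0,1]}|f'(u)|$. Suppose $c\in\mathbb{R}$ and $(U,V)$ is a solution of $$cU_\xi+V_\xi+f(U)=0,\qquad U_\xi+c\tau V_\xi-V=0,\qquad \xi\in\mathbb{R},$$ satisfying $(U,V)(-\infty)=(0,0)$ and $(U,V)(+\infty)=(1,0)$. Then (i) $c$ has the same sign as $-\int_0^1 f(u)\,du$; (ii) $c^2\tau<1$. *)

theory Defs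
  imports "HOL-Analysis.Analysis"
begin

definition smooth_fun :: "(real \<Rightarrow> real) \<Rightarrow> bool" where
  "smooth_fun f \<longleftrightarrow> (\<exists>D. D 0 = f \<and> (\<forall>n x. (D n has_real_derivative D (Suc n) x) (at x)))"

definition bistable :: "(real \<Rightarrow> real) \<Rightarrow> real \<Rightarrow> bool" where
  "bistable f \<alpha> \<longleftrightarrow> 0 < \<alpha> \<and> \<alpha> < 1 \<and>
     f 0 = 0 \<and> f \<alpha> = 0 \<and> f 1 = 0 \<and>
     deriv f 0 < 0 \<and> deriv f 1 < 0 \<and> deriv f \<alpha> > 0 \<and>
     (\<forall>u. (u < 0 \<or> (\<alpha> < u \<and> u < 1)) \<longrightarrow> f u > 0) \<and>
     (\<forall>u. ((0 < u \<and> u < \<alpha>) \<or> 1 < u) \<longrightarrow> f u < 0)"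

definition tau_m :: "(real \<Rightarrow> real) \<Rightarrow> real" where
  "tau_m f = 1 / Sup ((\<lambda>u. \<bar>deriv f u\<bar>) ` {0..1})"

end

theory Submission
  imports Defs
begin

text \<open>Write \<open>W = U'\<close> and \<open>D = 1 - c\<^sup>2 \<tau>\<close>. Eliminating \<open>V'\<close> gives
\<open>V = D W - c \<tau> f(U)\<close>, so for \<open>D \<noteq> 0\<close> the profile solves
\<open>D W' = - f(U) - c g(U) W\<close> with \<open>g = 1 - \<tau> f'\<close>. For an antiderivative \<open>F\<close> of \<open>f\<close> the
energy \<open>E = D W\<^sup>2/2 + F(U)\<close> satisfies \<open>E' = - c g(U) W\<^sup>2\<close> and tends to \<open>F(0)\<close> at
\<open>-\<infinity>\<close> and to \<open>F(1)\<close> at \<open>+\<infinity>\<close>.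

If \<open>D \<le> 0\<close> then \<open>E \<le> F(U)\<close>; on a tail where \<open>U\<close> is close to the end state towards
which \<open>E\<close> decreases, \<open>g(U) > 0\<close> and the strict local maximum of \<open>F\<close> at that state
force \<open>U\<close> to equal it, and then \<open>U\<close> is constant, which is absurd. Hence \<open>D > 0\<close>.
Then \<open>U\<close> stays in \<open>[0,1]\<close>, since at a global minimum below \<open>0\<close> (maximum above \<open>1\<close>)
the equation gives \<open>W' < 0\<close> (\<open>W' > 0\<close>). So \<open>g(U) > 0\<close> by the choice of \<open>\<tau>\<close>, \<open>E\<close> is
monotone with the sign of \<open>-c\<close>, and \<open>F(1) - F(0) = \<integral>\<^sub>0\<^sup>1 f\<close> has the sign of \<open>-c\<close>; strictly,
because a constant \<open>E\<close> would force \<open>W = 0\<close>.\<close>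

lemma continuous_has_global_antiderivative:
  fixes f :: "real \<Rightarrow> real"
  assumes "\<And>x. isCont f x"
  obtains F where "\<And>x. (F has_real_derivative f x) (at x)"
  using einterval_antiderivative[of "-\<infinity>" "\<infinity>" f] assms
  by (auto simp: has_real_derivative_iff_has_vector_derivative)

text \<open>The set of \<open>t\<close> with \<open>U = a\<close> on \<open>[t, \<infinity>)\<close> has no finite infimum \<open>s\<close>:
by continuity \<open>U\<close> stays \<open>\<delta>\<close>-close to \<open>a\<close> a little to the left of \<open>s\<close>, and rigidity
extends the set there.\<close>

lemma rigid_tail_imp_const_at_top:
  fixes U :: "real \<Rightarrow> real"
  assumes cont: "\<And>x. isCont U x" and "\<delta> > 0" and lim: "(U \<longlongrightarrow> a) at_top"
    and rigid: "\<And>t. \<forall>u\<ge>t. \<bar>U u - a\<bar> < \<delta> \<Longrightarrow> \<forall>u\<ge>t. U u = a"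
  shows "U x = a"
proof -
  define T where "T = {t. \<forall>u\<ge>t. U u = a}"
  obtain t1 where "\<forall>u\<ge>t1. \<bar>U u - a\<bar> < \<delta>"
    using tendstoD[OF lim \<open>\<delta> > 0\<close>] by (auto simp: eventually_at_top_linorder dist_real_def)
  hence "t1 \<in> T" unfolding T_def by (intro CollectI rigid)
  show ?thesis
  proof (cases "bdd_below T")
    case False
    then obtain t where "t \<in> T" "t \<le> x"
      using bdd_below.I[of T x] by (meson linorder_le_cases)
    thus ?thesis by (simp add: T_def)
  next
    case True
    define s where "s = Inf T"
    have right: "U u = a" if "s < u" for u
    proof -
      obtain t where "t \<in> T" "t < u"
        using cInf_less_iff[of T u] True \<open>s < u\<close> \<open>t1 \<in> T\<close> unfolding s_def by blast
      thus ?thesis by (simp add: T_def)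
    qed
    obtain e where "e > 0" and e: "\<And>y. \<bar>y - s\<bar> < e \<Longrightarrow> \<bar>U y - U s\<bar> < \<delta> / 2"
      using cont[of s] \<open>\<delta> > 0\<close> unfolding continuous_at_eps_delta dist_real_def
      by (meson half_gt_zero)
    have "\<bar>U s - a\<bar> < \<delta> / 2"
      using e[of "s + e/2"] right[of "s + e/2"] \<open>e > 0\<close> by (simp add: abs_minus_commute)
    have "\<bar>U u - a\<bar> < \<delta>" if "s - e/2 \<le> u" for u
    proof (cases "s < u")
      case True
      thus ?thesis using right \<open>\<delta> > 0\<close> by simp
    next
      case False
      hence "\<bar>u - s\<bar> < e" using that \<open>e > 0\<close> by simp
      thus ?thesis using e[of u] \<open>\<bar>U s - a\<bar> < \<delta> / 2\<close> by linarith
    qed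
    hence "s - e/2 \<in> T" unfolding T_def by (intro CollectI rigid) simp
    hence "s \<le> s - e/2" unfolding s_def using True by (rule cInf_lower)
    with \<open>e > 0\<close> show ?thesis by simp
  qed
qed

lemma rigid_tail_imp_const_at_bot:
  fixes U :: "real \<Rightarrow> real"
  assumes cont: "\<And>x. isCont U x" and "\<delta> > 0" and lim: "(U \<longlongrightarrow> a) at_bot"
    and rigid: "\<And>t. \<forall>u\<le>t. \<bar>U u - a\<bar> < \<delta> \<Longrightarrow> \<forall>u\<le>t. U u = a"
  shows "U x = a"
proof -
  have "(\<lambda>x. U (- x)) (- x) = a"
  proof (rule rigid_tail_imp_const_at_top[of "\<lambda>x. U (- x)" \<delta> a "- x", OF _ \<open>\<delta> > 0\<close>])
    show "isCont (\<lambda>x. U (- x)) y" for y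
      using isCont_o2[OF isCont_minus[OF continuous_ident] cont] .
    show "((\<lambda>x. U (- x)) \<longlongrightarrow> a) at_top"
      using lim unfolding filterlim_at_bot_mirror .
    fix t assume near: "\<forall>u\<ge>t. \<bar>U (- u) - a\<bar> < \<delta>"
    have "\<forall>u\<le>- t. \<bar>U u - a\<bar> < \<delta>"
    proof (intro allI impI)
      fix u :: real assume "u \<le> - t"
      thus "\<bar>U u - a\<bar> < \<delta>" using near[rule_format, of "- u"] by simp
    qed
    hence "\<forall>u\<le>- t. U u = a" by (rule rigid)
    thus "\<forall>u\<ge>t. U (- u) = a" by simp
  qed
  thus ?thesis by simp
qed

lemma isCont_attains_global_min:
  fixes U :: "real \<Rightarrow> real"
  assumes cont: "\<And>x. isCont U x"
    and "(U \<longlongrightarrow> a) at_bot" and "(U \<longlongrightarrow> b) at_top" and "U x < a" and "U x < b"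
  obtains m where "\<And>y. U m \<le> U y"
proof -
  obtain A where A: "\<And>y. y \<le> A \<Longrightarrow> U x < U y"
    using order_tendstoD(1)[OF assms(2,4)] by (auto simp: eventually_at_bot_linorder)
  obtain B where B: "\<And>y. B \<le> y \<Longrightarrow> U x < U y"
    using order_tendstoD(1)[OF assms(3,5)] by (auto simp: eventually_at_top_linorder)
  define K where "K = {min A x..max B x}"
  have "\<exists>m\<in>K. \<forall>y\<in>K. U m \<le> U y"
    using cont by (intro continuous_attains_inf) (auto simp: K_def intro: continuous_at_imp_continuous_on)
  then obtain m where m: "\<And>y. y \<in> K \<Longrightarrow> U m \<le> U y" by blast
  have "U m \<le> U y" for y
    using m[of x] m[of y] A[of y] B[of y] by (force simp: K_def)
  thus ?thesis by (rule that)
qed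

lemma critical_point_second_deriv_neg_not_min:
  fixes U W :: "real \<Rightarrow> real"
  assumes U': "\<And>x. (U has_real_derivative W x) (at x)"
    and W': "(W has_real_derivative w) (at m)" and "W m = 0" and "w < 0"
  shows "\<exists>y. U y < U m"
proof -
  obtain d where "d > 0" and d: "\<And>h. 0 < h \<Longrightarrow> h < d \<Longrightarrow> W (m + h) < W m"
    using DERIV_neg_dec_right[OF W' \<open>w < 0\<close>] by blast
  obtain z where z: "m < z" "z < m + d/2" and "U (m + d/2) - U m = (m + d/2 - m) * W z"
    using MVT2[of m "m + d/2" U W] U' \<open>d > 0\<close> by auto
  moreover have "W z < 0" using d[of "z - m"] z \<open>W m = 0\<close> by simp
  ultimately have "U (m + d/2) < U m" using mult_pos_neg[of "d/2" "W z"] \<open>d > 0\<close> by simp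
  thus ?thesis by blast
qed

lemma critical_point_second_deriv_pos_not_max:
  fixes U W :: "real \<Rightarrow> real"
  assumes U': "\<And>x. (U has_real_derivative W x) (at x)"
    and W': "(W has_real_derivative w) (at m)" and "W m = 0" and "0 < w"
  shows "\<exists>y. U m < U y"
  using critical_point_second_deriv_neg_not_min[of "\<lambda>x. - U x" "\<lambda>x. - W x" "- w" m]
    assms by (auto intro: DERIV_minus)

lemma antiderivative_strict_local_max:
  fixes F f :: "real \<Rightarrow> real"
  assumes F': "\<And>x. (F has_real_derivative f x) (at x)"
    and left: "\<And>x. a - \<delta> < x \<Longrightarrow> x < a \<Longrightarrow> 0 < f x"
    and right: "\<And>x. a < x \<Longrightarrow> x < a + \<delta> \<Longrightarrow> f x < 0"
    and "\<bar>u - a\<bar> < \<delta>" and "u \<noteq> a"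
  shows "F u < F a"
proof -
  have cont: "continuous_on S F" for S
    using F' by (meson DERIV_isCont continuous_at_imp_continuous_on)
  show ?thesis
  proof (cases "u < a")
    case True
    show ?thesis
    proof (rule DERIV_pos_imp_increasing_open[OF True _ cont])
      fix x assume "u < x" "x < a"
      thus "\<exists>y. (F has_real_derivative y) (at x) \<and> 0 < y"
        using F' left[of x] \<open>\<bar>u - a\<bar> < \<delta>\<close> by auto
    qed
  next
    case False
    hence "a < u" using \<open>u \<noteq> a\<close> by simp
    thus ?thesis
    proof (rule DERIV_neg_imp_decreasing_open[OF _ _ cont])
      fix x assume "a < x" "x < u"
      thus "\<exists>y. (F has_real_derivative y) (at x) \<and> y < 0"
        using F' right[of x] \<open>\<bar>u - a\<bar> < \<delta>\<close> by auto
    qed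
  qed
qed

locale travelling_wave =
  fixes f f' F U W V V' :: "real \<Rightarrow> real" and c \<tau> :: real
  assumes f_deriv: "\<And>u. (f has_real_derivative f' u) (at u)"
    and F_deriv: "\<And>u. (F has_real_derivative f u) (at u)"
    and U_deriv: "\<And>x. (U has_real_derivative W x) (at x)"
    and V_deriv: "\<And>x. (V has_real_derivative V' x) (at x)"
    and wave_eq1: "\<And>x. c * W x + V' x + f (U x) = 0"
    and wave_eq2: "\<And>x. W x + c * \<tau> * V' x - V x = 0"
begin

definition D :: real where "D = 1 - c\<^sup>2 * \<tau>"

definition g :: "real \<Rightarrow> real" where "g u = 1 - \<tau> * f' u"

definition E :: "real \<Rightarrow> real" where "E x = D / 2 * (W x)\<^sup>2 + F (U x)"

lemma V'_eq: "V' x = - f (U x) - c * W x"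
  using wave_eq1[of x] by linarith

lemma V_eq: "V x = D * W x - c * \<tau> * f (U x)"
  using wave_eq2[of x, unfolded V'_eq] unfolding D_def
  by (simp add: algebra_simps power2_eq_square)

lemma f_U_deriv: "((\<lambda>x. f (U x)) has_real_derivative f' (U x) * W x) (at x)"
  by (rule DERIV_chain2[OF f_deriv U_deriv])

lemma W_deriv:
  assumes "D \<noteq> 0"
  shows "(W has_real_derivative (- f (U x) - c * g (U x) * W x) / D) (at x)"
proof -
  have "W = (\<lambda>x. (V x + c * \<tau> * f (U x)) / D)"
    using V_eq assms by (intro ext) (simp add: field_simps)
  moreover have "((\<lambda>x. (V x + c * \<tau> * f (U x)) / D) has_real_derivative
      (V' x + c * \<tau> * (f' (U x) * W x)) / D) (at x)"
    by (intro DERIV_cdivide DERIV_add DERIV_cmult V_deriv f_U_deriv)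
  moreover have "V' x + c * \<tau> * (f' (U x) * W x) = - f (U x) - c * g (U x) * W x"
    unfolding V'_eq g_def by (simp add: algebra_simps)
  ultimately show ?thesis by simp
qed

lemma E_deriv: "(E has_real_derivative - c * g (U x) * (W x)\<^sup>2) (at x)"
proof (cases "D = 0")
  case True
  \<comment> \<open>\<open>W\<close> need not be differentiable now, but \<open>V = - c \<tau> f(U)\<close> is, and its
    derivative gives \<open>f(U) = - c g(U) W\<close> outright\<close>
  have "V = (\<lambda>x. - (c * \<tau>) * f (U x))"
    using V_eq True by (intro ext) simp
  hence "(V has_real_derivative - (c * \<tau>) * (f' (U x) * W x)) (at x)"
    using DERIV_cmult[OF f_U_deriv, of "- (c * \<tau>)"] by simp
  hence "V' x = - (c * \<tau>) * (f' (U x) * W x)"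
    by (rule DERIV_unique[OF V_deriv])
  hence "f (U x) = - c * g (U x) * W x"
    unfolding V'_eq g_def by (simp add: algebra_simps)
  hence f_U_W: "f (U x) * W x = - c * g (U x) * (W x)\<^sup>2"
    by (simp add: power2_eq_square)
  have "E = (\<lambda>x. F (U x))"
    using True by (intro ext) (simp add: E_def)
  thus ?thesis
    using DERIV_chain2[OF F_deriv U_deriv, of x] unfolding f_U_W by simp
next
  case False
  have "((\<lambda>x. (W x)\<^sup>2) has_real_derivative 2 * W x * ((- f (U x) - c * g (U x) * W x) / D)) (at x)"
    using DERIV_power[OF W_deriv[OF False], of 2] by (simp add: algebra_simps)
  hence "(E has_real_derivative D / 2 * (2 * W x * ((- f (U x) - c * g (U x) * W x) / D))
      + f (U x) * W x) (at x)"
    unfolding E_def by (intro DERIV_add DERIV_cmult DERIV_chain2[OF F_deriv U_deriv])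
  moreover have "D / 2 * (2 * W x * ((- f (U x) - c * g (U x) * W x) / D)) + f (U x) * W x
      = - c * g (U x) * (W x)\<^sup>2"
    using False by (simp add: field_simps power2_eq_square)
  ultimately show ?thesis by simp
qed

lemma E_tendsto:
  assumes "(U \<longlongrightarrow> l) net" and "(V \<longlongrightarrow> 0) net" and "f l = 0"
  shows "(E \<longlongrightarrow> F l) net"
proof -
  have f_U: "((\<lambda>x. f (U x)) \<longlongrightarrow> 0) net"
    using isCont_tendsto_compose[OF DERIV_isCont[OF f_deriv] assms(1)] assms(3) by simp
  have "((\<lambda>x. D / 2 * (W x)\<^sup>2) \<longlongrightarrow> 0) net"
  proof (cases "D = 0")
    case False
    have "W = (\<lambda>x. (V x + c * \<tau> * f (U x)) / D)"
      using V_eq False by (intro ext) (simp add: field_simps)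
    hence "(W \<longlongrightarrow> (0 + c * \<tau> * 0) / D) net"
      by (simp only:) (intro tendsto_intros assms(2) f_U False)
    hence "((\<lambda>x. D / 2 * (W x)\<^sup>2) \<longlongrightarrow> D / 2 * 0\<^sup>2) net"
      by (intro tendsto_intros) simp
    thus ?thesis by simp
  qed simp
  moreover have "((\<lambda>x. F (U x)) \<longlongrightarrow> F l) net"
    by (rule isCont_tendsto_compose[OF DERIV_isCont[OF F_deriv] assms(1)])
  ultimately have "((\<lambda>x. D / 2 * (W x)\<^sup>2 + F (U x)) \<longlongrightarrow> 0 + F l) net"
    by (rule tendsto_add)
  thus ?thesis by (simp add: E_def[abs_def])
qed

lemma E_antimono:
  assumes "u \<le> v" and "\<And>x. u \<le> x \<Longrightarrow> x \<le> v \<Longrightarrow> 0 \<le> c * g (U x)"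
  shows "E v \<le> E u"
proof (rule DERIV_nonpos_imp_nonincreasing[OF assms(1)])
  fix x assume "u \<le> x" "x \<le> v"
  hence "- c * g (U x) * (W x)\<^sup>2 \<le> 0"
    using assms(2) by (simp add: mult_nonneg_nonneg)
  thus "\<exists>y. (E has_real_derivative y) (at x) \<and> y \<le> 0" using E_deriv by blast
qed

lemma E_mono:
  assumes "u \<le> v" and "\<And>x. u \<le> x \<Longrightarrow> x \<le> v \<Longrightarrow> c * g (U x) \<le> 0"
  shows "E u \<le> E v"
proof (rule DERIV_nonneg_imp_nondecreasing[OF assms(1)])
  fix x assume "u \<le> x" "x \<le> v"
  hence "0 \<le> - c * g (U x) * (W x)\<^sup>2"
    using assms(2) by (simp add: mult_nonpos_nonneg)
  thus "\<exists>y. (E has_real_derivative y) (at x) \<and> 0 \<le> y" using E_deriv by blast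
qed

end

locale bistable_wave = travelling_wave +
  fixes \<alpha> :: real
  assumes bistable: "bistable f \<alpha>"
    and f'_cont: "\<And>u. isCont f' u"
    and tau_f'_lt_1: "\<And>u. 0 \<le> u \<Longrightarrow> u \<le> 1 \<Longrightarrow> \<tau> * f' u < 1"
    and U_at_bot: "(U \<longlongrightarrow> 0) at_bot" and V_at_bot: "(V \<longlongrightarrow> 0) at_bot"
    and U_at_top: "(U \<longlongrightarrow> 1) at_top" and V_at_top: "(V \<longlongrightarrow> 0) at_top"
begin

lemma alpha_bounds: "0 < \<alpha>" "\<alpha> < 1"
  and f_0: "f 0 = 0" and f_1: "f 1 = 0"
  and f_pos: "u < 0 \<or> (\<alpha> < u \<and> u < 1) \<Longrightarrow> 0 < f u"
  and f_neg: "(0 < u \<and> u < \<alpha>) \<or> 1 < u \<Longrightarrow> f u < 0"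
  using bistable unfolding bistable_def by auto

lemma U_cont: "isCont U x"
  by (rule DERIV_isCont[OF U_deriv])

lemma g_pos: "0 \<le> u \<Longrightarrow> u \<le> 1 \<Longrightarrow> 0 < g u"
  unfolding g_def using tau_f'_lt_1 by simp

lemma g_pos_near:
  assumes "0 \<le> a" "a \<le> 1"
  obtains \<delta> where "0 < \<delta>" "\<And>u. \<bar>u - a\<bar> < \<delta> \<Longrightarrow> 0 < g u"
proof -
  have "isCont g a" unfolding g_def[abs_def] by (intro continuous_intros f'_cont)
  then obtain \<delta> where "0 < \<delta>" "\<And>u. \<bar>u - a\<bar> < \<delta> \<Longrightarrow> \<bar>g u - g a\<bar> < g a"
    using g_pos[OF assms] unfolding continuous_at_eps_delta dist_real_def by blast
  thus ?thesis by (intro that[of \<delta>]) fastforce+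
qed

lemma F_strict_max_0: "\<bar>u\<bar> < \<alpha> \<Longrightarrow> u \<noteq> 0 \<Longrightarrow> F u < F 0"
  using antiderivative_strict_local_max[OF F_deriv, of 0 \<alpha> u] f_pos f_neg by auto

lemma F_strict_max_1: "\<bar>u - 1\<bar> < 1 - \<alpha> \<Longrightarrow> u \<noteq> 1 \<Longrightarrow> F u < F 1"
  using antiderivative_strict_local_max[OF F_deriv, of 1 "1 - \<alpha>" u] f_pos f_neg by auto

lemma E_at_bot: "(E \<longlongrightarrow> F 0) at_bot"
  by (rule E_tendsto[OF U_at_bot V_at_bot f_0])

lemma E_at_top: "(E \<longlongrightarrow> F 1) at_top"
  by (rule E_tendsto[OF U_at_top V_at_top f_1])

lemma degenerate_forward_wave_constant:
  assumes "D \<le> 0" and "0 < c"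
  shows "U x = 1"
proof -
  obtain \<delta>1 where "0 < \<delta>1" and g_near: "\<And>u. \<bar>u - 1\<bar> < \<delta>1 \<Longrightarrow> 0 < g u"
    using g_pos_near[of 1] by auto
  define \<delta> where "\<delta> = min \<delta>1 (1 - \<alpha>)"
  have "0 < \<delta>" using \<open>0 < \<delta>1\<close> alpha_bounds by (simp add: \<delta>_def)
  show ?thesis
  proof (rule rigid_tail_imp_const_at_top[OF U_cont \<open>0 < \<delta>\<close> U_at_top])
    fix t assume near: "\<forall>u\<ge>t. \<bar>U u - 1\<bar> < \<delta>"
    show "\<forall>u\<ge>t. U u = 1"
    proof (intro allI impI)
      fix u assume "t \<le> u"
      have "E v \<le> E u" if "u \<le> v" for v
        using that near \<open>t \<le> u\<close> \<open>0 < c\<close> g_near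
        by (intro E_antimono) (auto simp: \<delta>_def less_imp_le)
      hence "F 1 \<le> E u"
        by (intro tendsto_upperbound[OF E_at_top]) (auto simp: eventually_at_top_linorder)
      also have "E u \<le> F (U u)"
        using \<open>D \<le> 0\<close> by (simp add: E_def mult_nonpos_nonneg)
      finally show "U u = 1"
        using F_strict_max_1[of "U u"] near \<open>t \<le> u\<close> by (force simp: \<delta>_def)
    qed
  qed
qed

lemma degenerate_backward_wave_constant:
  assumes "D \<le> 0" and "c < 0"
  shows "U x = 0"
proof -
  obtain \<delta>0 where "0 < \<delta>0" and g_near: "\<And>u. \<bar>u - 0\<bar> < \<delta>0 \<Longrightarrow> 0 < g u"
    using g_pos_near[of 0] by auto
  define \<delta> where "\<delta> = min \<delta>0 \<alpha>"
  have "0 < \<delta>" using \<open>0 < \<delta>0\<close> alpha_bounds by (simp add: \<delta>_def)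
  show ?thesis
  proof (rule rigid_tail_imp_const_at_bot[OF U_cont \<open>0 < \<delta>\<close> U_at_bot])
    fix t assume near: "\<forall>u\<le>t. \<bar>U u - 0\<bar> < \<delta>"
    show "\<forall>u\<le>t. U u = 0"
    proof (intro allI impI)
      fix u assume "u \<le> t"
      have "E v \<le> E u" if "v \<le> u" for v
        using that near \<open>u \<le> t\<close> \<open>c < 0\<close> g_near
        by (intro E_mono) (auto simp: \<delta>_def mult_neg_pos less_imp_le)
      hence "F 0 \<le> E u"
        by (intro tendsto_upperbound[OF E_at_bot]) (auto simp: eventually_at_bot_linorder)
      also have "E u \<le> F (U u)"
        using \<open>D \<le> 0\<close> by (simp add: E_def mult_nonpos_nonneg)
      finally show "U u = 0"
        using F_strict_max_0[of "U u"] near \<open>u \<le> t\<close> by (force simp: \<delta>_def)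
    qed
  qed
qed

lemma D_pos: "0 < D"
proof (rule ccontr)
  assume "\<not> 0 < D"
  hence "D \<le> 0" by simp
  moreover have "c \<noteq> 0" using \<open>D \<le> 0\<close> by (auto simp: D_def)
  ultimately consider "\<And>x. U x = 1" | "\<And>x. U x = 0"
    using degenerate_forward_wave_constant degenerate_backward_wave_constant
    by (metis linorder_neqE_linordered_idom)
  thus False
  proof cases
    case 1
    hence "U = (\<lambda>_. 1)" by (intro ext)
    hence "(U \<longlongrightarrow> 1) at_bot" by simp
    thus False using tendsto_unique[OF _ _ U_at_bot] by fastforce
  next
    case 2
    hence "U = (\<lambda>_. 0)" by (intro ext)
    hence "(U \<longlongrightarrow> 0) at_top" by simp
    thus False using tendsto_unique[OF _ _ U_at_top] by fastforce
  qed
qed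

lemma U_nonneg: "0 \<le> U x"
proof (rule ccontr)
  assume "\<not> 0 \<le> U x"
  then obtain m where min: "\<And>y. U m \<le> U y"
    using isCont_attains_global_min[OF U_cont U_at_bot U_at_top, of x] by auto
  hence "U m < 0" using \<open>\<not> 0 \<le> U x\<close> by (meson le_less_trans not_le)
  have "W m = 0"
    by (rule DERIV_local_min[OF U_deriv zero_less_one]) (use min in auto)
  moreover have "(- f (U m) - c * g (U m) * W m) / D < 0"
    using \<open>W m = 0\<close> f_pos[of "U m"] \<open>U m < 0\<close> D_pos by (simp add: divide_neg_pos)
  ultimately obtain y where "U y < U m"
    using critical_point_second_deriv_neg_not_min[OF U_deriv W_deriv] D_pos by fastforce
  thus False using min[of y] by simp
qed

lemma U_le_1: "U x \<le> 1"
proof (rule ccontr)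
  assume "\<not> U x \<le> 1"
  then obtain m where max: "\<And>y. U y \<le> U m"
    using isCont_attains_global_min[of "\<lambda>x. - U x" "- 0" "- 1" x] U_cont
      tendsto_minus[OF U_at_bot] tendsto_minus[OF U_at_top] by force
  hence "1 < U m" using \<open>\<not> U x \<le> 1\<close> by (meson less_le_trans not_le)
  have "W m = 0"
    by (rule DERIV_local_max[OF U_deriv zero_less_one]) (use max in auto)
  moreover have "0 < (- f (U m) - c * g (U m) * W m) / D"
    using \<open>W m = 0\<close> f_neg[of "U m"] \<open>1 < U m\<close> D_pos by (simp add: divide_neg_pos)
  ultimately obtain y where "U m < U y"
    using critical_point_second_deriv_pos_not_max[OF U_deriv W_deriv] D_pos by fastforce
  thus False using max[of y] by simp
qed

lemma g_U_pos: "0 < g (U x)"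
  using g_pos U_nonneg U_le_1 by blast

lemma energy_between_limits_nonneg_speed:
  assumes "0 \<le> c"
  shows "F 1 \<le> E x \<and> E x \<le> F 0"
proof -
  have "E v \<le> E u" if "u \<le> v" for u v
    using g_U_pos that assms by (intro E_antimono) (auto simp: less_imp_le)
  thus ?thesis
    by (intro conjI tendsto_upperbound[OF E_at_top] tendsto_lowerbound[OF E_at_bot])
      (auto simp: eventually_at_top_linorder eventually_at_bot_linorder)
qed

lemma energy_between_limits_nonpos_speed:
  assumes "c \<le> 0"
  shows "F 0 \<le> E x \<and> E x \<le> F 1"
proof -
  have "E u \<le> E v" if "u \<le> v" for u v
    using g_U_pos that assms by (intro E_mono) (auto simp: mult_nonpos_nonneg less_imp_le)
  thus ?thesis
    by (intro conjI tendsto_upperbound[OF E_at_bot] tendsto_lowerbound[OF E_at_top])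
      (auto simp: eventually_at_top_linorder eventually_at_bot_linorder)
qed

lemma energy_limits_differ:
  assumes "c \<noteq> 0"
  shows "F 0 \<noteq> F 1"
proof
  assume "F 0 = F 1"
  hence "E x = F 0" for x
    using energy_between_limits_nonneg_speed[of x] energy_between_limits_nonpos_speed[of x]
    by (cases "0 \<le> c") auto
  hence "E = (\<lambda>_. F 0)" by (intro ext)
  hence "(E has_real_derivative 0) (at x)" for x by simp
  hence "c * g (U x) * (W x)\<^sup>2 = 0" for x
    using DERIV_unique[OF E_deriv] by fastforce
  hence "W x = 0" for x
    using assms g_U_pos by (metis mult_eq_0_iff power_eq_0_iff less_irrefl)
  hence "U x = U 0" for x
    using U_deriv by (metis DERIV_isconst_all)
  then obtain k where "U = (\<lambda>_. k)" by blast
  thus False using U_at_top U_at_bot by (simp add: tendsto_const_iff)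
qed

lemma sgn_speed: "sgn c = sgn (F 0 - F 1)"
  using energy_between_limits_nonneg_speed[of 0] energy_between_limits_nonpos_speed[of 0]
    energy_limits_differ
  by (cases c "0::real" rule: linorder_cases) auto

end

lemma smooth_fun_deriv:
  assumes "smooth_fun f"
  shows smooth_fun_has_deriv: "(f has_real_derivative deriv f x) (at x)"
    and smooth_fun_isCont_deriv: "isCont (deriv f) x"
proof -
  obtain D where "D 0 = f" and D: "\<And>n x. (D n has_real_derivative D (Suc n) x) (at x)"
    using assms unfolding smooth_fun_def by blast
  hence f': "(f has_real_derivative D 1 y) (at y)" for y by (metis One_nat_def)
  hence "deriv f = D 1" by (intro ext DERIV_imp_deriv)
  thus "(f has_real_derivative deriv f x) (at x)" using f' by simp
  show "isCont (deriv f) x" using D[of 1 x] \<open>deriv f = D 1\<close> by (simp add: DERIV_isCont)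
qed

lemma mult_deriv_lt_one_if_lt_tau_m:
  fixes f :: "real \<Rightarrow> real"
  assumes "continuous_on {0..1} (deriv f)" and "0 \<le> \<tau>" and "\<tau> < tau_m f" and "u \<in> {0..1}"
  shows "\<tau> * deriv f u < 1"
proof -
  define S where "S = Sup ((\<lambda>u. \<bar>deriv f u\<bar>) ` {0..1})"
  have "bdd_above ((\<lambda>u. \<bar>deriv f u\<bar>) ` {0..1})"
    using assms(1) by (intro bounded_imp_bdd_above compact_imp_bounded compact_continuous_image)
      (auto intro: continuous_intros)
  hence le_S: "\<bar>deriv f u\<bar> \<le> S" unfolding S_def using assms(4) by (intro cSup_upper) auto
  \<comment> \<open>a vanishing supremum would give \<open>tau_m f = 1 / 0 = 0\<close>, leaving no room for \<open>\<tau>\<close>\<close>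
  have "0 < 1 / S" using assms(2,3) unfolding tau_m_def S_def[symmetric] by linarith
  hence "0 < S" by simp
  hence "\<tau> * S < 1" using assms(3) unfolding tau_m_def S_def[symmetric] by (simp add: field_simps)
  moreover have "\<tau> * deriv f u \<le> \<tau> * S"
    using le_S assms(2) by (intro mult_left_mono) auto
  ultimately show ?thesis by linarith
qed

theorem proposition2p1:
  fixes f U V :: "real \<Rightarrow> real" and c \<tau> \<alpha> :: real
  assumes "smooth_fun f"
    and "bistable f \<alpha>"
    and "0 \<le> \<tau>" and "\<tau> < tau_m f"
    and "\<forall>\<xi>. U differentiable (at \<xi>)" and "\<forall>\<xi>. V differentiable (at \<xi>)"
    and "\<forall>\<xi>. c * deriv U \<xi> + deriv V \<xi> + f (U \<xi>) = 0"
    and "\<forall>\<xi>. deriv U \<xi> + c * \<tau> * deriv V \<xi> - V \<xi> = 0"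
    and "(U \<longlongrightarrow> 0) at_bot" and "(V \<longlongrightarrow> 0) at_bot"
    and "(U \<longlongrightarrow> 1) at_top" and "(V \<longlongrightarrow> 0) at_top"
  shows "sgn c = sgn (- integral {0..1} f) \<and> c\<^sup>2 * \<tau> < 1"
proof -
  note f_deriv = smooth_fun_has_deriv[OF assms(1)]
  obtain F where F_deriv: "\<And>u. (F has_real_derivative f u) (at u)"
    using continuous_has_global_antiderivative DERIV_isCont[OF f_deriv] by blast
  have "continuous_on {0..1} (deriv f)"
    using smooth_fun_isCont_deriv[OF assms(1)] by (intro continuous_at_imp_continuous_on) auto
  note tau_bound = mult_deriv_lt_one_if_lt_tau_m[OF this assms(3,4)]
  interpret bistable_wave f "deriv f" F U "deriv U" V "deriv V" c \<tau> \<alpha>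
    using assms f_deriv F_deriv smooth_fun_isCont_deriv[OF assms(1)] tau_bound
    by unfold_locales (auto simp: DERIV_deriv_iff_real_differentiable)
  have "(f has_integral F 1 - F 0) {0..1}"
    using F_deriv[unfolded has_real_derivative_iff_has_vector_derivative]
    by (intro fundamental_theorem_of_calculus) (auto intro: has_vector_derivative_at_within)
  hence "integral {0..1} f = F 1 - F 0" by (rule integral_unique)
  thus ?thesis using sgn_speed D_pos unfolding D_def by simp
qed

end
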